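(* Let $d$ be even and let $A$ be a concave linear Nakayama algebra which is a higher Auslander algebra of global dimension $d$. Let $I$ be an indecomposable injective, non-projective $A$-module of length $m\ge2$. Then $\operatorname{pd}I=d$ and $I$ is plus-strictly-increasing; explicitly, $\operatorname{char}I=(d,c_2,\dots,c_m)$ with $c_2<c_3<\cdots<c_m<d$ odd numbers.
   Context: Conventions: $k$ a field; linear Nakayama algebras are basic $kQ/I$ with $Q$ a linearly oriented path; modules finitely generated left, indecomposables uniserial. Even/odd indecomposable: parity of $\operatorname{pd}$. For indecomposable $M$ with composition factors $F_1=\operatorname{soc}M,\dots,F_m=\operatorname{top}M$, $\operatorname{char}M=(z_1,\dots,z_m)$ with $z_i=\operatorname{pd}F_i$ if $F_i$ odd, $z_i=\operatorname{pd}M$ if $F_i$ even. Concave: Kupisch series weakly increasing then weakly decreasing. Higher Auslander algebra: global dimension = dominant dimension. An indecomposable module $Y$ is plus-strictly-increasing if $\operatorname{char}Y=(e,c_2,\dots,c_m)$ with $e$ even and $c_2<\cdots<c_m<e$ odd. *)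

theory Defs
  imports Main "HOL-Library.Extended_Nat"
begin

text \<open>
Combinatorial model of a linear Nakayama algebra A = kQ/I, Q = 0 -> 1 -> ... -> n-1,
given by its Kupisch series c = [c_0, ..., c_(n-1)], c_i = length of P_i = A e_i.
An indecomposable (uniserial) module is encoded by a pair (i, l) with 0 < l <= c_i:
top S_i, composition factors S_i (top), S_(i+1), ..., S_(i+l-1) (socle).
A pair (i, 0) encodes the zero module.  Nothing depends on the field k.
\<close>

definition kupisch :: "nat list \<Rightarrow> bool" where
  "kupisch c \<longleftrightarrow> c \<noteq> [] \<and> last c = 1 \<and>
     (\<forall>i. i + 1 < length c \<longrightarrow> 2 \<le> c ! i \<and> c ! i \<le> c ! (i + 1) + 1)"

definition concave :: "nat list \<Rightarrow> bool" where
  "concave c \<longleftrightarrow> (\<exists>p < length c.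
      (\<forall>i j. i \<le> j \<and> j \<le> p \<longrightarrow> c ! i \<le> c ! j) \<and>
      (\<forall>i j. p \<le> i \<and> i \<le> j \<and> j < length c \<longrightarrow> c ! j \<le> c ! i))"

definition indec :: "nat list \<Rightarrow> nat \<times> nat \<Rightarrow> bool" where
  "indec c M \<longleftrightarrow> fst M < length c \<and> 1 \<le> snd M \<and> snd M \<le> c ! fst M"

definition is_proj :: "nat list \<Rightarrow> nat \<times> nat \<Rightarrow> bool" where
  "is_proj c M \<longleftrightarrow> snd M = c ! fst M"

text \<open>M(i,l) is injective iff it is not a proper submodule of M(i-1,l+1).\<close>
definition is_inj :: "nat list \<Rightarrow> nat \<times> nat \<Rightarrow> bool" where
  "is_inj c M \<longleftrightarrow> fst M = 0 \<or> c ! (fst M - 1) \<le> snd M"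

text \<open>Syzygy: kernel of the projective cover P_i -> M(i,l).\<close>
definition syz :: "nat list \<Rightarrow> nat \<times> nat \<Rightarrow> nat \<times> nat" where
  "syz c M = (let (i, l) = M in
     if 0 < l \<and> l < c ! i then (i + l, c ! i - l) else (i, 0))"

definition pd :: "nat list \<Rightarrow> nat \<times> nat \<Rightarrow> enat" where
  "pd c M = (if \<exists>k. is_proj c ((syz c ^^ k) M)
             then enat (LEAST k. is_proj c ((syz c ^^ k) M)) else \<infinity>)"

definition gldim :: "nat list \<Rightarrow> enat" where
  "gldim c = Sup (pd c ` {M. indec c M})"

text \<open>Injective envelope of M(i,l): the indecomposable injective with socle S_(i+l-1).\<close>
definition env_top :: "nat list \<Rightarrow> nat \<times> nat \<Rightarrow> nat" where
  "env_top c M = (LEAST t. fst M + snd M \<le> t + c ! t)"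

definition env :: "nat list \<Rightarrow> nat \<times> nat \<Rightarrow> nat \<times> nat" where
  "env c M = (env_top c M, fst M + snd M - env_top c M)"

text \<open>Cosyzygy: cokernel of M -> injective envelope (zero module if M injective).\<close>
definition cosyz :: "nat list \<Rightarrow> nat \<times> nat \<Rightarrow> nat \<times> nat" where
  "cosyz c M = (if snd M = 0 then M else (env_top c M, fst M - env_top c M))"

text \<open>dominant dimension of a module: the first k terms of its minimal injective
  coresolution are projective.\<close>
definition domdim_ge :: "nat list \<Rightarrow> nat \<times> nat \<Rightarrow> nat \<Rightarrow> bool" where
  "domdim_ge c M k \<longleftrightarrow> (\<forall>j < k. snd ((cosyz c ^^ j) M) \<noteq> 0 \<longrightarrow>
                              is_proj c (env c ((cosyz c ^^ j) M)))"

definition domdim_mod :: "nat list \<Rightarrow> nat \<times> nat \<Rightarrow> enat" where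
  "domdim_mod c M = Sup {enat k | k. domdim_ge c M k}"

definition domdim :: "nat list \<Rightarrow> enat" where
  "domdim c = (INF i \<in> {..<length c}. domdim_mod c (i, c ! i))"

definition higher_auslander :: "nat list \<Rightarrow> nat \<Rightarrow> bool" where
  "higher_auslander c d \<longleftrightarrow> gldim c = enat d \<and> domdim c = enat d"

definition odd_e :: "enat \<Rightarrow> bool" where
  "odd_e x \<longleftrightarrow> (\<exists>n. x = enat n \<and> odd n)"

text \<open>char M = (z_1,...,z_m), F_1 = soc M = S_(i+l-1), ..., F_m = top M = S_i.\<close>
definition charM :: "nat list \<Rightarrow> nat \<times> nat \<Rightarrow> enat list" where
  "charM c M = map (\<lambda>k. let p = pd c (fst M + snd M - k, 1) in
                          if odd_e p then p else pd c M) [1..<snd M + 1]"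

definition plus_strictly_increasing :: "nat list \<Rightarrow> nat \<times> nat \<Rightarrow> bool" where
  "plus_strictly_increasing c Y \<longleftrightarrow> indec c Y \<and>
     (\<exists>e cs. charM c Y = enat e # map enat cs \<and> even e \<and>
             sorted_wrt (<) (cs @ [e]) \<and> (\<forall>x \<in> set cs. odd x))"

end

theory Submission
  imports Defs
begin

(* A uniserial module is an interval [a, b) of vertices.  With F t = t + c_t the projective
   P_t is [t, F t), the injective envelope of [a, b) is [G b, b) for the lower adjoint G of F,
   the syzygies of [a, b) are cut out by the zigzag a, b, F a, F b, F^2 a, ..., and the
   cosyzygies of P_j by F j, j, G (F j), G j, ...

   Dominant dimension d makes the first d cosyzygy points of every non-injective P_j ends of
   projective-injective modules.  Global dimension d then forbids F to identify two points
   B < C whose G-orbit consists of such ends for d/2 steps: the orbits would interleave and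
   produce a module of projective dimension d + 1.

   For I = [i, e) this shows that the first d resolution points of I are tops of
   projective-injectives, so F is strictly increasing on them and the resolution of I stalls
   exactly at step d.  A simple S_t with i <= t <= e - 2 is squeezed between the resolution
   of I and the inequalities F^s (e - 1) < F^s e, so pd S_t = 2 nu + 1 < d with a collision
   F^(nu+1) t = F^(nu+1) (t + 1); played against the forbidden identification, these
   collisions force pd S_(t+1) < pd S_t.  The socle S_(e-1) has even projective dimension. *)

fun zigzag :: "('a \<Rightarrow> 'a) \<Rightarrow> 'a \<Rightarrow> 'a \<Rightarrow> nat \<Rightarrow> 'a" where
  "zigzag f a b 0 = a"
| "zigzag f a b (Suc 0) = b"
| "zigzag f a b (Suc (Suc s)) = f (zigzag f a b s)"

lemma zigzag_even: "zigzag f a b (2 * s) = (f ^^ s) a"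
  by (induction s) (auto simp: numeral_2_eq_2)

lemma zigzag_odd: "zigzag f a b (Suc (2 * s)) = (f ^^ s) b"
  by (induction s) (auto simp: numeral_2_eq_2)

lemma zigzag_Suc: "zigzag f a b (Suc s) = zigzag f b (f a) s"
  by (induction s rule: nat_induct2) simp_all

lemma pd_rec: "pd c M = (if is_proj c M then 0 else eSuc (pd c (syz c M)))"
proof (cases "is_proj c M")
  case True
  then have "\<exists>k. is_proj c ((syz c ^^ k) M)" "(LEAST k. is_proj c ((syz c ^^ k) M)) = 0"
    by (metis funpow_0, simp)
  with True show ?thesis by (simp add: pd_def zero_enat_def)
next
  case False
  have shift: "is_proj c ((syz c ^^ Suc k) M) \<longleftrightarrow> is_proj c ((syz c ^^ k) (syz c M))" for k
    by (simp add: funpow_Suc_right del: funpow.simps)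
  have ex: "(\<exists>k. is_proj c ((syz c ^^ k) M))
      \<longleftrightarrow> (\<exists>k. is_proj c ((syz c ^^ k) (syz c M)))"
    using False shift by (metis funpow_0 not0_implies_Suc)
  show ?thesis
  proof (cases "\<exists>k. is_proj c ((syz c ^^ k) M)")
    case True
    then obtain k where "is_proj c ((syz c ^^ k) M)" by blast
    then have "(LEAST k. is_proj c ((syz c ^^ k) M))
        = Suc (LEAST k. is_proj c ((syz c ^^ k) (syz c M)))"
      unfolding shift[symmetric] by (rule Least_Suc) (use False in simp)
    with True ex False show ?thesis by (simp add: pd_def eSuc_enat)
  next
    case False
    with ex \<open>\<not> is_proj c M\<close> show ?thesis by (simp add: pd_def)
  qed
qed

lemma domdim_ge_mono: "domdim_ge c M k \<Longrightarrow> k' \<le> k \<Longrightarrow> domdim_ge c M k'"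
  unfolding domdim_ge_def by auto

lemma domdim_ge_if_le_domdim_mod:
  assumes "enat d \<le> domdim_mod c M"
  shows "domdim_ge c M d"
proof (cases d)
  case 0
  then show ?thesis by (simp add: domdim_ge_def)
next
  case (Suc d')
  then have "enat d' < domdim_mod c M" using assms by (simp add: Suc_ile_eq)
  then obtain k where "domdim_ge c M k" "d' < k"
    unfolding domdim_mod_def less_Sup_iff by auto
  with Suc show ?thesis by (auto intro: domdim_ge_mono)
qed

lemma higher_auslander_pd_le:
  assumes "higher_auslander c d" "indec c M"
  shows "pd c M \<le> enat d"
  using assms Sup_upper[of "pd c M" "pd c ` {M. indec c M}"]
  by (simp add: higher_auslander_def gldim_def)

lemma higher_auslander_domdim_ge:
  assumes "higher_auslander c d" "j < length c"
  shows "domdim_ge c (j, c ! j) d"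
  using assms INF_lower[of j "{..<length c}" "\<lambda>i. domdim_mod c (i, c ! i)"]
  by (intro domdim_ge_if_le_domdim_mod) (simp add: higher_auslander_def domdim_def)

text \<open>The module (a, b - a) is the interval [a, b) of vertices; the projective
  P_t = (t, c ! t) is [t, proj_end c t), and the injective envelope of [a, b) is
  [inj_start c b, b).  Setting proj_end c t = length c for t beyond the last vertex
  keeps all iterates of proj_end inside {..length c}.\<close>

definition proj_end :: "nat list \<Rightarrow> nat \<Rightarrow> nat" where
  "proj_end c t = (if t < length c then t + c ! t else length c)"

definition inj_start :: "nat list \<Rightarrow> nat \<Rightarrow> nat" where
  "inj_start c b = (LEAST t. b \<le> t + c ! t)"

abbreviation ival :: "nat \<Rightarrow> nat \<Rightarrow> nat \<times> nat" where
  "ival a b \<equiv> (a, b - a)"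

locale kupisch_series =
  fixes c :: "nat list"
  assumes kupisch: "kupisch c"
begin

abbreviation "n \<equiv> length c"
abbreviation "F \<equiv> proj_end c"
abbreviation "G \<equiv> inj_start c"

lemma n_pos: "0 < n"
  using kupisch by (simp add: kupisch_def)

lemma nth_last: "c ! (n - 1) = 1"
  using kupisch last_conv_nth[of c] by (simp add: kupisch_def)

lemma nth_pos: "t < n \<Longrightarrow> 0 < c ! t"
  using kupisch nth_last unfolding kupisch_def
  by (metis Suc_eq_plus1 Suc_lessI diff_Suc_1 less_numeral_extra(1) not_numeral_le_zero
      zero_less_iff_neq_zero)

lemma add_nth_mono: "a \<le> b \<Longrightarrow> b < n \<Longrightarrow> a + c ! a \<le> b + c ! b"
proof (induction b rule: dec_induct)
  case (step b)
  then have "c ! b \<le> c ! (b + 1) + 1" using kupisch by (simp add: kupisch_def)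
  with step show ?case by simp
qed simp

lemma F_eq: "t < n \<Longrightarrow> F t = t + c ! t"
  by (simp add: proj_end_def)

lemma F_le_n: "F t \<le> n"
  using add_nth_mono[of t "n - 1"] nth_last n_pos by (simp add: proj_end_def)

lemma F_mono: "a \<le> b \<Longrightarrow> F a \<le> F b"
  using add_nth_mono F_le_n by (simp add: proj_end_def)

lemma less_F: "t < n \<Longrightarrow> t < F t"
  using nth_pos by (simp add: F_eq)

lemma F_pow_mono: "a \<le> b \<Longrightarrow> (F ^^ s) a \<le> (F ^^ s) b"
  by (induction s) (simp_all add: F_mono)

lemma F_pow_le_n: "a \<le> n \<Longrightarrow> (F ^^ s) a \<le> n"
  by (cases s) (simp_all add: F_le_n)

lemma G_less_n: "b \<le> n \<Longrightarrow> G b < n"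
proof -
  assume "b \<le> n"
  then have "b \<le> (n - 1) + c ! (n - 1)" using nth_last by simp
  then have "G b \<le> n - 1" unfolding inj_start_def by (rule Least_le)
  then show ?thesis using n_pos by linarith
qed

lemma le_F_G: "b \<le> n \<Longrightarrow> b \<le> F (G b)"
proof -
  assume "b \<le> n"
  then have "b \<le> (n - 1) + c ! (n - 1)" using nth_last by simp
  then have "b \<le> G b + c ! G b" unfolding inj_start_def by (rule LeastI)
  then show ?thesis using G_less_n[OF \<open>b \<le> n\<close>] by (simp add: F_eq)
qed

lemma G_le_iff: "b \<le> n \<Longrightarrow> t < n \<Longrightarrow> G b \<le> t \<longleftrightarrow> b \<le> F t"
proof
  assume "b \<le> n" "G b \<le> t"
  then show "b \<le> F t" using le_F_G F_mono order_trans by blast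
next
  assume "b \<le> F t" "t < n"
  then show "G b \<le> t" unfolding inj_start_def by (intro Least_le) (simp add: F_eq)
qed

lemma G_mono: "a \<le> b \<Longrightarrow> b \<le> n \<Longrightarrow> G a \<le> G b"
  using G_le_iff[of a "G b"] G_less_n le_F_G by fastforce

lemma G_F_le: "t < n \<Longrightarrow> G (F t) \<le> t"
  using G_le_iff[of "F t" t] F_le_n by simp

lemma G_le_self: "b \<le> n \<Longrightarrow> G b \<le> b"
  using G_le_iff[of b b] less_F[of b] G_less_n[of b] by (cases "b < n") auto

lemma G_pow_le_n: "b \<le> n \<Longrightarrow> (G ^^ k) b \<le> n"
  by (induction k) (auto dest: G_less_n)

lemma G_pow_mono: "a \<le> b \<Longrightarrow> b \<le> n \<Longrightarrow> (G ^^ k) a \<le> (G ^^ k) b"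
  by (induction k) (simp_all add: G_mono G_pow_le_n)

text \<open>P_t is injective iff proj_injective t; the injective envelope [G b, b) is
  projective iff inj_projective b.\<close>

definition proj_injective :: "nat \<Rightarrow> bool" where
  "proj_injective t \<longleftrightarrow> G (F t) = t"

definition inj_projective :: "nat \<Rightarrow> bool" where
  "inj_projective b \<longleftrightarrow> F (G b) = b"

lemma F_less_F_if_proj_injective:
  assumes "a < b" "b < n" "proj_injective b"
  shows "F a < F b"
proof (rule ccontr)
  assume "\<not> F a < F b"
  then have "G (F b) \<le> a" using G_le_iff[of "F b" a] F_le_n assms(1,2) by simp
  with assms show False by (simp add: proj_injective_def)
qed

lemma G_less_G_if_inj_projective:
  assumes "a < b" "b \<le> n" "inj_projective a" "inj_projective b"
  shows "G a < G b"
  using F_mono[of "G b" "G a"] assms by (fastforce simp: inj_projective_def)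

lemma inj_projective_F: "t < n \<Longrightarrow> inj_projective (F t)"
  using F_mono[OF G_F_le] le_F_G[OF F_le_n] by (simp add: inj_projective_def eq_iff)

lemma proj_injective_G: "b \<le> n \<Longrightarrow> proj_injective (G b)"
  using G_F_le[OF G_less_n] G_mono[OF le_F_G F_le_n] by (simp add: proj_injective_def eq_iff)

lemma G_F_less: "t < n \<Longrightarrow> \<not> proj_injective t \<Longrightarrow> G (F t) < t"
  using G_F_le[of t] by (simp add: proj_injective_def)

lemma pd_ival_proj: "a < n \<Longrightarrow> pd c (ival a (F a)) = 0"
  by (subst pd_rec) (simp add: is_proj_def F_eq)

lemma pd_ival_syz:
  assumes "a < n" "a < b" "b < F a"
  shows "pd c (ival a b) = eSuc (pd c (ival b (F a)))"
proof -
  have "syz c (ival a b) = ival b (F a)" using assms by (auto simp: syz_def F_eq)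
  moreover have "\<not> is_proj c (ival a b)" using assms by (simp add: is_proj_def F_eq)
  ultimately show ?thesis by (subst pd_rec) simp
qed

lemma indec_ival: "a < n \<Longrightarrow> a < b \<Longrightarrow> b \<le> F a \<Longrightarrow> indec c (ival a b)"
  by (simp add: indec_def F_eq, linarith)

text \<open>The syzygies of [a, b) are the intervals [res_pts a b s, res_pts a b (s + 1)).\<close>

abbreviation res_pts :: "nat \<Rightarrow> nat \<Rightarrow> nat \<Rightarrow> nat" where
  "res_pts a b \<equiv> zigzag F a b"

lemma res_pts_le_n: "a \<le> n \<Longrightarrow> b \<le> n \<Longrightarrow> res_pts a b s \<le> n"
  by (induction s rule: nat_induct2) (simp_all add: F_le_n)

lemma res_pts_Suc_bounds:
  assumes "a < b" "b \<le> F a"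
  shows "res_pts a b s \<le> res_pts a b (Suc s) \<and> res_pts a b (Suc s) \<le> F (res_pts a b s)"
  using assms by (induction s) (simp_all add: F_mono)

lemma res_pts_mono:
  assumes "a < b" "b \<le> F a" "s' \<le> s"
  shows "res_pts a b s' \<le> res_pts a b s"
  using lift_Suc_mono_le[of "res_pts a b"] res_pts_Suc_bounds[OF assms(1,2)] assms(3) by blast

lemma pd_ival_eq_first_stall:
  assumes "a < n" "a < b" "b \<le> F a"
    and "\<forall>s<k. res_pts a b (Suc s) \<noteq> res_pts a b (Suc (Suc s))"
    and "res_pts a b (Suc k) = res_pts a b (Suc (Suc k))"
  shows "pd c (ival a b) = enat k"
  using assms
proof (induction k arbitrary: a b)
  case 0
  then show ?case using pd_ival_proj by (simp add: zero_enat_def)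
next
  case (Suc k)
  have "b < F a" using Suc.prems(3,4) by fastforce
  moreover have "F a \<le> F b" using F_mono Suc.prems(2) by simp
  moreover have "b < n" using \<open>b < F a\<close> F_le_n[of a] by simp
  moreover have "\<forall>s<k. res_pts b (F a) (Suc s) \<noteq> res_pts b (F a) (Suc (Suc s))"
    using Suc.prems(4) by (simp only: zigzag_Suc[symmetric]) auto
  moreover have "res_pts b (F a) (Suc k) = res_pts b (F a) (Suc (Suc k))"
    using Suc.prems(5) by (simp only: zigzag_Suc[symmetric])
  ultimately have "pd c (ival b (F a)) = enat k"
    using Suc.IH by blast
  then show ?case using pd_ival_syz[OF Suc.prems(1,2) \<open>b < F a\<close>] by (simp add: eSuc_enat)
qed

lemma res_pts_stall_exists:
  assumes "a < n" "a < b" "b \<le> F a"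
  shows "\<exists>k. res_pts a b (Suc k) = res_pts a b (Suc (Suc k))"
proof (rule ccontr)
  assume "\<not> ?thesis"
  then have strict: "res_pts a b (Suc k) < res_pts a b (Suc (Suc k))" for k
    using res_pts_Suc_bounds[OF assms(2,3)] by (metis le_neq_implies_less)
  have grow: "k + b \<le> res_pts a b (Suc k)" for k
  proof (induction k)
    case (Suc k)
    then show ?case using strict[of k] by simp
  qed simp
  have "res_pts a b (Suc n) \<le> n"
    using assms F_le_n[of a] by (intro res_pts_le_n) simp_all
  with grow[of n] assms(2) show False by simp
qed

definition res_len :: "nat \<Rightarrow> nat \<Rightarrow> nat" where
  "res_len a b = (LEAST k. res_pts a b (Suc k) = res_pts a b (Suc (Suc k)))"

lemma res_pts_stall_at_res_len:
  assumes "a < n" "a < b" "b \<le> F a"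
  shows "res_pts a b (Suc (res_len a b)) = res_pts a b (Suc (Suc (res_len a b)))"
  unfolding res_len_def using res_pts_stall_exists[OF assms] by (rule LeastI_ex)

lemma res_pts_less_before_res_len:
  assumes "a < n" "a < b" "b \<le> F a" "s < res_len a b"
  shows "res_pts a b (Suc s) < res_pts a b (Suc (Suc s))"
proof -
  have "res_pts a b (Suc s) \<noteq> res_pts a b (Suc (Suc s))"
    using not_less_Least[of s] assms(4) unfolding res_len_def by blast
  then show ?thesis using res_pts_Suc_bounds[OF assms(2,3), of "Suc s"] by simp
qed

lemma pd_ival:
  assumes "a < n" "a < b" "b \<le> F a"
  shows "pd c (ival a b) = enat (res_len a b)"
  using res_pts_stall_at_res_len[OF assms] res_pts_less_before_res_len[OF assms]
  by (intro pd_ival_eq_first_stall[OF assms]) (simp_all add: less_imp_neq)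

lemma res_pts_less_Suc:
  assumes "a < n" "a < b" "b \<le> F a" "s \<le> res_len a b"
  shows "res_pts a b s < res_pts a b (Suc s)"
  using assms res_pts_less_before_res_len[OF assms(1-3)] by (cases s) simp_all

lemma pd_simple: "t < n \<Longrightarrow> pd c (t, 1) = enat (res_len t (Suc t))"
  using pd_ival[of t "Suc t"] less_F[of t] by simp

text \<open>The cosyzygies of P_j = [j, F j) are [cores_pts j (s + 1), cores_pts j s),
  as long as these points decrease.\<close>

abbreviation cores_pts :: "nat \<Rightarrow> nat \<Rightarrow> nat" where
  "cores_pts j \<equiv> zigzag G (F j) j"

lemma cores_pts_le_n: "j \<le> n \<Longrightarrow> cores_pts j s \<le> n"
  by (induction s rule: nat_induct2) (auto simp: F_le_n dest: G_less_n)

lemma cosyz_pow_proj: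
  assumes "j < n" "\<forall>s'<s. cores_pts j (Suc s') < cores_pts j s'"
  shows "(cosyz c ^^ s) (j, c ! j) = ival (cores_pts j (Suc s)) (cores_pts j s)"
  using assms
proof (induction s)
  case 0
  then show ?case by (simp add: F_eq)
next
  case (Suc s)
  have less: "cores_pts j (Suc s) < cores_pts j s" using Suc.prems(2) by simp
  have env: "env_top c (ival (cores_pts j (Suc s)) (cores_pts j s)) = G (cores_pts j s)"
    using less by (simp add: env_top_def inj_start_def)
  have "(cosyz c ^^ Suc s) (j, c ! j) = cosyz c (ival (cores_pts j (Suc s)) (cores_pts j s))"
    using Suc by simp
  also have "\<dots> = ival (G (cores_pts j s)) (cores_pts j (Suc s))"
    using less env by (simp add: cosyz_def)
  finally show ?case by simp
qed

lemma is_proj_env_ival_iff: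
  assumes "a \<le> b" "b \<le> n"
  shows "is_proj c (env c (ival a b)) \<longleftrightarrow> inj_projective b"
proof -
  have "env_top c (ival a b) = G b" using assms by (simp add: env_top_def inj_start_def)
  moreover have "G b \<le> b" "G b < n" using G_le_self G_less_n assms by auto
  ultimately show ?thesis
    using assms by (auto simp: env_def is_proj_def inj_projective_def F_eq)
qed

lemma cores_pts_odd_res_pts:
  assumes "\<And>s'. s' < s \<Longrightarrow> proj_injective (res_pts a b s')" "2 * r \<le> s"
  shows "cores_pts (res_pts a b s) (2 * r + 1) = res_pts a b (s - 2 * r)"
  using assms(2)
proof (induction r)
  case (Suc r)
  have "s - 2 * r = Suc (Suc (s - 2 * Suc r))" using Suc.prems by simp
  then have F_step: "res_pts a b (s - 2 * r) = F (res_pts a b (s - 2 * Suc r))"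
    by (simp only: zigzag.simps)
  have "cores_pts (res_pts a b s) (2 * Suc r + 1) = G (cores_pts (res_pts a b s) (2 * r + 1))"
    by (simp add: numeral_2_eq_2)
  also have "\<dots> = G (F (res_pts a b (s - 2 * Suc r)))" using Suc F_step by simp
  also have "\<dots> = res_pts a b (s - 2 * Suc r)"
    using assms(1)[of "s - 2 * Suc r"] Suc.prems by (simp add: proj_injective_def)
  finally show ?case .
qed simp

lemma res_pts_le_cores_pts_even:
  assumes "a < b" "b \<le> F a" "\<And>s'. s' < s \<Longrightarrow> proj_injective (res_pts a b s')"
    and "1 \<le> r" "2 * r \<le> s + 1"
  shows "res_pts a b (s + 1 - 2 * r) \<le> cores_pts (res_pts a b s) (2 * r)"
  using assms(4,5)
proof (induction r rule: nat_induct_at_least)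
  case base
  have "F (res_pts a b (s - 1)) \<le> F (res_pts a b s)"
    using res_pts_mono[OF assms(1,2)] F_mono by simp
  then have "G (F (res_pts a b (s - 1))) \<le> G (F (res_pts a b s))"
    using G_mono F_le_n by blast
  moreover have "G (F (res_pts a b (s - 1))) = res_pts a b (s - 1)"
    using assms(3)[of "s - 1"] base by (simp add: proj_injective_def)
  ultimately show ?case by (simp add: numeral_2_eq_2)
next
  case (Suc r)
  have "s + 1 - 2 * r = Suc (Suc (s + 1 - 2 * Suc r))" using Suc.prems by simp
  then have F_step: "res_pts a b (s + 1 - 2 * r) = F (res_pts a b (s + 1 - 2 * Suc r))"
    by (simp only: zigzag.simps)
  have "cores_pts (res_pts a b s) (2 * r) \<le> n"
    using zigzag_even G_pow_le_n[OF F_le_n] by metis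
  then have "G (res_pts a b (s + 1 - 2 * r)) \<le> G (cores_pts (res_pts a b s) (2 * r))"
    using G_mono Suc by simp
  moreover have "G (F (res_pts a b (s + 1 - 2 * Suc r))) = res_pts a b (s + 1 - 2 * Suc r)"
    using assms(3) Suc.prems by (simp add: proj_injective_def)
  ultimately show ?case using F_step by (simp add: numeral_2_eq_2)
qed

lemma pd_ival_G_pow:
  assumes "B < C" "C < n" "F B = F C"
    and "\<And>j. j < k \<Longrightarrow> inj_projective ((G ^^ j) B) \<and> inj_projective ((G ^^ j) C)
                         \<and> (G ^^ Suc j) C < (G ^^ j) B"
  shows "(G ^^ k) B < (G ^^ k) C \<and> (G ^^ k) C \<le> F ((G ^^ k) B)
         \<and> pd c (ival ((G ^^ k) B) ((G ^^ k) C)) = enat (2 * k + 1)"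
  using assms(4)
proof (induction k)
  case 0
  have "C < F B" using less_F[OF assms(2)] assms(3) by simp
  with assms have "pd c (ival B C) = eSuc (pd c (ival C (F B)))"
    by (intro pd_ival_syz) simp_all
  also have "pd c (ival C (F B)) = 0" using pd_ival_proj[OF assms(2)] assms(3) by simp
  finally show ?case using assms(1) \<open>C < F B\<close> by (simp add: zero_enat_def eSuc_enat)
next
  case (Suc k)
  define a b where "a = (G ^^ k) B" and "b = (G ^^ k) C"
  have IH: "a < b" "b \<le> F a" "pd c (ival a b) = enat (2 * k + 1)"
    using Suc by (simp_all add: a_def b_def)
  have proj: "F (G a) = a" "F (G b) = b" and "G b < a"
    using Suc.prems[of k] by (simp_all add: a_def b_def inj_projective_def)
  have "b \<le> n" using IH(2) F_le_n order_trans by blast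
  then have "G a < G b" "G b < n"
    using G_less_G_if_inj_projective[OF IH(1)] Suc.prems[of k] G_less_n
    by (simp_all add: a_def b_def)
  then have "pd c (ival (G a) (G b)) = eSuc (pd c (ival (G b) a))"
    using pd_ival_syz[of "G a" "G b"] proj \<open>G b < a\<close> by simp
  also have "pd c (ival (G b) a) = eSuc (pd c (ival a b))"
    using pd_ival_syz[of "G b" a] proj IH(1) \<open>G b < a\<close> \<open>G b < n\<close> by simp
  finally show ?case
    using IH \<open>G a < G b\<close> \<open>G b < a\<close> proj by (simp add: a_def b_def eSuc_enat)
qed

end

locale projectives_domdim_ge = kupisch_series +
  fixes d :: nat
  assumes domdim_ge_proj: "\<And>j. j < length c \<Longrightarrow> domdim_ge c (j, c ! j) d"
begin

lemma cores_pts_inj_projective_if_less: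
  assumes "j < n" "s < d" "\<forall>s'\<le>s. cores_pts j (Suc s') < cores_pts j s'"
  shows "inj_projective (cores_pts j s)"
proof -
  have less: "cores_pts j (Suc s) < cores_pts j s" using assms(3) by simp
  have "(cosyz c ^^ s) (j, c ! j) = ival (cores_pts j (Suc s)) (cores_pts j s)"
    using cosyz_pow_proj assms by auto
  with less have "is_proj c (env c (ival (cores_pts j (Suc s)) (cores_pts j s)))"
    using domdim_ge_proj[OF assms(1)] assms(2) unfolding domdim_ge_def by fastforce
  then show ?thesis using is_proj_env_ival_iff less cores_pts_le_n assms(1) by simp
qed

lemma cores_pts_strict:
  assumes "j < n" "\<not> proj_injective j" "s \<le> d"
  shows "\<forall>s'\<le>s. cores_pts j (Suc s') < cores_pts j s'"
  using assms(3)
proof (induction s)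
  case 0
  then show ?case using less_F assms(1) by simp
next
  case (Suc s)
  then have IH: "\<forall>s'\<le>s. cores_pts j (Suc s') < cores_pts j s'" by simp
  have "cores_pts j (Suc (Suc s)) < cores_pts j (Suc s)"
  proof (cases s)
    case 0
    then show ?thesis using G_F_less assms(1,2) by simp
  next
    case (Suc s1)
    have "inj_projective (cores_pts j s')" if "s' \<le> s" for s'
      using cores_pts_inj_projective_if_less[OF assms(1)] IH that \<open>Suc s \<le> d\<close> by simp
    moreover have "cores_pts j s < cores_pts j s1" using IH Suc by auto
    ultimately have "G (cores_pts j s) < G (cores_pts j s1)"
      using G_less_G_if_inj_projective cores_pts_le_n assms(1) Suc by simp
    then show ?thesis using Suc by simp
  qed
  then show ?case using IH le_Suc_eq by auto
qed

lemma cores_pts_less: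
  "j < n \<Longrightarrow> \<not> proj_injective j \<Longrightarrow> s \<le> d \<Longrightarrow> cores_pts j (Suc s) < cores_pts j s"
  using cores_pts_strict by simp

lemma cores_pts_inj_projective:
  "j < n \<Longrightarrow> \<not> proj_injective j \<Longrightarrow> s < d \<Longrightarrow> inj_projective (cores_pts j s)"
  using cores_pts_inj_projective_if_less[of j s] cores_pts_strict[of j s] by simp

end

locale even_higher_auslander = projectives_domdim_ge +
  assumes pd_le_d: "\<And>M. indec c M \<Longrightarrow> pd c M \<le> enat d"
    and even_d: "even d"
begin

abbreviation "q \<equiv> d div 2"

lemma res_len_le_d: "a < n \<Longrightarrow> a < b \<Longrightarrow> b \<le> F a \<Longrightarrow> res_len a b \<le> d"
  using pd_le_d[OF indec_ival] pd_ival by fastforce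

lemma G_pow_inj_projective:
  assumes "b < n" "\<not> proj_injective b" "j < q"
  shows "inj_projective ((G ^^ j) b)"
  using cores_pts_inj_projective[OF assms(1,2), of "2 * j + 1"] assms(3) even_d
  by (simp add: zigzag_odd)

lemma G_pow_F_inj_projective:
  assumes "b < n" "\<not> proj_injective b" "j < q"
  shows "inj_projective ((G ^^ j) (F b))"
  using cores_pts_inj_projective[OF assms(1,2), of "2 * j"] assms(3) even_d
  by (simp add: zigzag_even)

text \<open>Otherwise pd_ival_G_pow would produce a module of projective dimension d + 1.\<close>

lemma F_less_F_if_G_orbit_inj_projective:
  assumes "B < C" "C < n" "\<And>j. j < q \<Longrightarrow> inj_projective ((G ^^ j) B)"
  shows "F B < F C"
proof (rule ccontr)
  assume "\<not> F B < F C"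
  then have FBC: "F B = F C" using F_mono[of B C] assms(1) by simp
  have GFC: "G (F C) \<le> B" using G_F_le[of B] FBC assms(1,2) by simp
  then have C: "\<not> proj_injective C" using assms(1) by (simp add: proj_injective_def)
  have "inj_projective ((G ^^ j) C) \<and> (G ^^ Suc j) C < (G ^^ j) B" if "j < q" for j
  proof
    show "inj_projective ((G ^^ j) C)" using G_pow_inj_projective[OF assms(2) C that] .
    have "cores_pts C (2 * Suc j + 1) < cores_pts C (2 * Suc j)"
      using cores_pts_less[OF assms(2) C, of "2 * Suc j"] that even_d by simp
    moreover have "cores_pts C (2 * Suc j) = (G ^^ j) (G (F C))"
      by (simp only: zigzag_even funpow_Suc_right comp_def)
    moreover have "(G ^^ j) (G (F C)) \<le> (G ^^ j) B"
      using G_pow_mono[OF GFC] assms(1,2) by simp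
    ultimately show "(G ^^ Suc j) C < (G ^^ j) B" by (simp add: zigzag_odd)
  qed
  then have "(G ^^ q) B < (G ^^ q) C" "(G ^^ q) C \<le> F ((G ^^ q) B)"
      and pd: "pd c (ival ((G ^^ q) B) ((G ^^ q) C)) = enat (d + 1)"
    using pd_ival_G_pow[OF assms(1,2) FBC, of q] assms(3) even_d by auto
  moreover have "(G ^^ q) C \<le> n" using G_pow_le_n assms(2) by simp
  ultimately have "indec c (ival ((G ^^ q) B) ((G ^^ q) C))"
    by (intro indec_ival) simp_all
  with pd show False using pd_le_d by fastforce
qed

lemma G_pow_F_pow_inj_projective:
  assumes "b < n" "\<not> proj_injective b"
  shows "(F ^^ k) b < n \<Longrightarrow> \<forall>j<q. inj_projective ((G ^^ j) ((F ^^ k) b))"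
proof (induction k)
  case 0
  then show ?case using G_pow_inj_projective[OF assms] by simp
next
  case (Suc k)
  define b' where "b' = (F ^^ k) b"
  have "F b' < n" using Suc.prems b'_def by simp
  then have "b' < n" by (cases "b' < n") (auto simp: proj_end_def)
  show ?case
  proof (cases "proj_injective b'")
    case False
    then show ?thesis using G_pow_F_inj_projective[OF \<open>b' < n\<close>] b'_def by simp
  next
    case True
    have IH: "\<forall>j<q. inj_projective ((G ^^ j) b')" using Suc.IH \<open>b' < n\<close> b'_def by simp
    show ?thesis
    proof (intro allI impI)
      fix j assume "j < q"
      show "inj_projective ((G ^^ j) ((F ^^ Suc k) b))"
      proof (cases j)
        case 0
        then show ?thesis using inj_projective_F[OF \<open>b' < n\<close>] b'_def by simp
      next
        case (Suc j')
        then have "(G ^^ j) ((F ^^ Suc k) b) = (G ^^ j') (G (F b'))"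
          using b'_def funpow_swap1[of G j' "F b'"] by simp
        also have "\<dots> = (G ^^ j') b'" using True by (simp add: proj_injective_def)
        finally have "(G ^^ j) ((F ^^ Suc k) b) = (G ^^ j') b'" .
        then show ?thesis using IH \<open>j < q\<close> Suc by simp
      qed
    qed
  qed
qed

end

locale injective_nonprojective = even_higher_auslander +
  fixes i m :: nat
  assumes indec_I: "indec c (i, m)" and is_inj_I: "is_inj c (i, m)"
    and not_proj_I: "\<not> is_proj c (i, m)" and two_le_m: "2 \<le> m"
begin

abbreviation "e \<equiv> i + m"
abbreviation "X \<equiv> res_pts i e"

lemma i_less_n: "i < n"
  using indec_I by (simp add: indec_def)

lemma e_less_F: "e < F i"
  using indec_I not_proj_I by (simp add: indec_def is_proj_def F_eq[OF i_less_n])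

lemma e_le_n: "e \<le> n"
  using e_less_F F_le_n[of i] by simp

lemma i_less_e: "i < e"
  using two_le_m by simp

lemma G_e: "G e = i"
proof -
  have "G e \<le> i" using G_le_iff[OF e_le_n i_less_n] e_less_F by simp
  moreover have "\<not> G e \<le> i - 1" if "0 < i"
  proof -
    have "F (i - 1) < e" using is_inj_I that i_less_n by (simp add: is_inj_def F_eq)
    then show ?thesis using G_le_iff[OF e_le_n, of "i - 1"] i_less_n by simp
  qed
  ultimately show ?thesis by (cases "i = 0") auto
qed

lemma not_inj_projective_e: "\<not> inj_projective e"
  using G_e e_less_F by (simp add: inj_projective_def)

lemma res_pts_I_mono: "s' \<le> s \<Longrightarrow> X s' \<le> X s"
  using res_pts_mono[OF i_less_e] e_less_F by simp

text \<open>If X s were not the top of a projective-injective, the coresolution of P_(X s) would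
  retrace the resolution of I backwards and end either at e, whose injective envelope is I, or
  at a point of [e, F i) with projective injective envelope.\<close>

lemma res_pts_I_proj_injective_step:
  assumes "s < d" "X s < n" "\<And>s'. s' < s \<Longrightarrow> proj_injective (X s')"
  shows "proj_injective (X s)"
proof (rule ccontr)
  assume not_pi: "\<not> proj_injective (X s)"
  let ?Y = "cores_pts (X s)"
  have "s \<noteq> 0"
  proof
    assume "s = 0"
    with not_pi show False using proj_injective_G[OF e_le_n] G_e by simp
  qed
  have Y_inj: "inj_projective (?Y s)"
    using cores_pts_inj_projective[OF assms(2) not_pi assms(1)] .
  show False
  proof (cases "even s")
    case False
    then obtain p where "s = 2 * p + 1" by (blast elim: oddE)
    then have "?Y s = e" using cores_pts_odd_res_pts[where s = s and r = p, OF assms(3)] by simp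
    then show False using Y_inj not_inj_projective_e by simp
  next
    case True
    then obtain p where p: "s = 2 * p" "1 \<le> p" using \<open>s \<noteq> 0\<close> by (auto elim: evenE)
    have "2 * (p - 1) + 1 = s - 1" "s - 2 * (p - 1) = 2" using p by auto
    then have "?Y (s - 1) = X 2"
      using cores_pts_odd_res_pts[where s = s and r = "p - 1", OF assms(3)] by (simp only: le_add1)
    moreover have "?Y (Suc (s - 1)) < ?Y (s - 1)"
      using cores_pts_less[OF assms(2) not_pi, of "s - 1"] assms(1) by simp
    ultimately have "?Y s < F i" using \<open>s \<noteq> 0\<close> by (simp add: numeral_2_eq_2)
    have "e \<le> ?Y s"
      using res_pts_le_cores_pts_even[where s = s and r = p, OF i_less_e _ assms(3) p(2)]
        e_less_F p by simp
    moreover have "?Y s \<le> n" using cores_pts_le_n assms(2) by simp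
    ultimately have "i \<le> G (?Y s)" using G_mono G_e by fastforce
    then have "F i \<le> ?Y s" using F_mono Y_inj by (fastforce simp: inj_projective_def)
    with \<open>?Y s < F i\<close> show False by simp
  qed
qed

lemma res_pts_I_proj_injective_if_less_n: "s < d \<Longrightarrow> X s < n \<Longrightarrow> proj_injective (X s)"
proof (induction s rule: less_induct)
  case (less s)
  have "proj_injective (X s')" if "s' < s" for s'
    using less.IH[OF that] that less.prems res_pts_I_mono[of s' s] by simp
  with less.prems show ?case by (rule res_pts_I_proj_injective_step)
qed

lemma res_len_I: "res_len i e = d"
proof (rule ccontr)
  define k where "k = res_len i e"
  note resolution = i_less_n i_less_e less_imp_le[OF e_less_F]
  assume "res_len i e \<noteq> d"
  then have "k < d" using res_len_le_d[OF resolution] k_def by simp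
  have "k \<noteq> 0"
  proof
    assume "k = 0"
    then show False using res_pts_stall_at_res_len[OF resolution] e_less_F k_def by simp
  qed
  then have "X (k - 1) < X k" "X k < X (Suc k)"
    using res_pts_less_Suc[OF resolution, of "k - 1"] res_pts_less_Suc[OF resolution, of k] k_def
    by simp_all
  moreover have "X (Suc k) \<le> n" using res_pts_le_n e_le_n i_less_n by simp
  ultimately have "F (X (k - 1)) < F (X k)"
    using res_pts_I_proj_injective_if_less_n[OF \<open>k < d\<close>] by (simp add: F_less_F_if_proj_injective)
  moreover have "Suc k = Suc (Suc (k - 1))" using \<open>k \<noteq> 0\<close> by simp
  then have "X (Suc k) = F (X (k - 1))" by (simp only: zigzag.simps)
  ultimately show False using res_pts_stall_at_res_len[OF resolution] k_def by simp
qed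

lemma pd_I: "pd c (i, m) = enat d"
  using pd_ival[OF i_less_n i_less_e] e_less_F res_len_I by simp

lemma res_pts_I_less_Suc: "s \<le> d \<Longrightarrow> X s < X (Suc s)"
  using res_pts_less_Suc[OF i_less_n i_less_e] e_less_F res_len_I by simp

lemma res_pts_I_less_n: "s \<le> d \<Longrightarrow> X s < n"
  using res_pts_I_less_Suc[of s] res_pts_le_n[OF _ e_le_n, of i "Suc s"] i_less_n by simp

lemma res_pts_I_proj_injective: "s < d \<Longrightarrow> proj_injective (X s)"
  using res_pts_I_proj_injective_if_less_n res_pts_I_less_n by simp

lemma res_pts_I_stall: "X (Suc d) = X (Suc (Suc d))"
  using res_pts_stall_at_res_len[OF i_less_n i_less_e] e_less_F res_len_I by simp

lemma F_pow_pred_e_less: "s \<le> q \<Longrightarrow> (F ^^ s) (e - 1) < (F ^^ s) e"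
proof (induction s)
  case 0
  then show ?case using i_less_e by simp
next
  case (Suc s)
  have "Suc (2 * s) < d" using Suc.prems even_d by auto
  then have "proj_injective (X (Suc (2 * s)))" "X (Suc (2 * s)) < n"
    using res_pts_I_proj_injective[of "Suc (2 * s)"] res_pts_I_less_n[of "Suc (2 * s)"] by simp_all
  moreover have "X (Suc (2 * s)) = (F ^^ s) e" by (rule zigzag_odd)
  ultimately show ?case using F_less_F_if_proj_injective Suc by simp
qed

lemma simple_bounds:
  assumes "t < e"
  shows "t < n" "Suc t \<le> F t"
  using assms e_le_n less_F[of t] by simp_all

lemma F_pow_Suc_less_n:
  assumes "t + 2 \<le> e" "s \<le> q"
  shows "(F ^^ s) (Suc t) < n"
proof -
  have "(F ^^ s) (Suc t) \<le> (F ^^ s) (e - 1)" using F_pow_mono assms(1) by simp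
  also have "\<dots> < (F ^^ s) e" using F_pow_pred_e_less assms(2) .
  also have "\<dots> \<le> n" using F_pow_le_n e_le_n .
  finally show ?thesis .
qed

text \<open>Even-indexed resolution points of S_t lie above those of I and odd-indexed ones below,
  so the strict growth of the resolution of I (at step d + 1: F^q (e - 1) < F^q e) keeps the
  resolution of S_t from stalling at an even step.\<close>

lemma res_pts_simple_less_Suc_even:
  assumes "i \<le> t" "t + 2 \<le> e" "s \<le> q"
  shows "res_pts t (Suc t) (Suc (2 * s)) < res_pts t (Suc t) (Suc (Suc (2 * s)))"
proof -
  have "res_pts t (Suc t) (Suc (2 * s)) = (F ^^ s) (Suc t)" by (simp add: zigzag_odd)
  also have "\<dots> < X (Suc (Suc (2 * s)))"
  proof (cases "s < q")
    case True
    have "(F ^^ s) (Suc t) \<le> (F ^^ s) e" using F_pow_mono assms(2) by simp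
    also have "\<dots> < X (Suc (Suc (2 * s)))"
      using res_pts_I_less_Suc[of "Suc (2 * s)"] True even_d by (auto simp: zigzag_odd)
    finally show ?thesis .
  next
    case False
    then have "2 * s = d" using assms(3) even_d by auto
    have "(F ^^ s) (Suc t) \<le> (F ^^ s) (e - 1)" using F_pow_mono assms(2) by simp
    also have "\<dots> < (F ^^ s) e" using F_pow_pred_e_less assms(3) .
    also have "\<dots> = X (Suc (Suc (2 * s)))"
      using res_pts_I_stall \<open>2 * s = d\<close> by (auto simp: zigzag_odd)
    finally show ?thesis .
  qed
  also have "\<dots> = (F ^^ Suc s) i" using zigzag_even[of F i e "Suc s"] by simp
  also have "\<dots> \<le> (F ^^ Suc s) t" using F_pow_mono assms(1) .
  also have "\<dots> = res_pts t (Suc t) (Suc (Suc (2 * s)))"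
    using zigzag_even[of F t "Suc t" "Suc s"] by simp
  finally show ?thesis .
qed

lemma res_len_simple_odd:
  assumes "i \<le> t" "t + 2 \<le> e"
  obtains \<nu> where "res_len t (Suc t) = 2 * \<nu> + 1" "\<nu> < q"
proof -
  have t: "t < n" "t < Suc t" "Suc t \<le> F t" using simple_bounds assms by simp_all
  define k where "k = res_len t (Suc t)"
  have "k \<le> d" using res_len_le_d[OF t] k_def by simp
  have "odd k"
  proof
    assume "even k"
    then obtain s where "k = 2 * s" by blast
    moreover have "s \<le> q" using \<open>k \<le> d\<close> calculation by simp
    ultimately show False
      using res_pts_simple_less_Suc_even[OF assms \<open>s \<le> q\<close>] res_pts_stall_at_res_len[OF t] k_def
      by simp
  qed
  then obtain \<nu> where "k = 2 * \<nu> + 1" by (blast elim: oddE)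
  moreover have "\<nu> < q" using \<open>k \<le> d\<close> even_d calculation by auto
  ultimately show ?thesis using that k_def by simp
qed

lemma simple_collision:
  assumes "i \<le> t" "t + 2 \<le> e" "res_len t (Suc t) = 2 * \<nu> + 1"
  shows "(F ^^ \<nu>) t < (F ^^ \<nu>) (Suc t)" "F ((F ^^ \<nu>) t) = F ((F ^^ \<nu>) (Suc t))"
proof -
  have t: "t < n" "t < Suc t" "Suc t \<le> F t" using simple_bounds assms by simp_all
  show "(F ^^ \<nu>) t < (F ^^ \<nu>) (Suc t)"
    using res_pts_less_Suc[OF t, of "2 * \<nu>"] assms(3) by (simp add: zigzag_even zigzag_odd)
  show "F ((F ^^ \<nu>) t) = F ((F ^^ \<nu>) (Suc t))"
    using res_pts_stall_at_res_len[OF t] assms(3) by (simp add: zigzag_even zigzag_odd)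
qed

text \<open>If the simples S_t and S_(t+1) had resolutions of lengths 2 nu + 1 <= 2 nu' + 1,
  the collisions of F they produce would contradict F_less_F_if_G_orbit_inj_projective.\<close>

lemma res_len_simple_Suc_less:
  assumes "i \<le> t" "t + 3 \<le> e"
  shows "res_len (Suc t) (Suc (Suc t)) < res_len t (Suc t)"
proof (rule ccontr)
  assume not_less: "\<not> ?thesis"
  have t: "i \<le> t" "t + 2 \<le> e" and t': "i \<le> Suc t" "Suc t + 2 \<le> e" using assms by simp_all
  obtain \<nu> where \<nu>: "res_len t (Suc t) = 2 * \<nu> + 1" "\<nu> < q"
    using t by (rule res_len_simple_odd)
  obtain \<nu>' where \<nu>': "res_len (Suc t) (Suc (Suc t)) = 2 * \<nu>' + 1" "\<nu>' < q"
    using t' by (rule res_len_simple_odd)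
  have "\<nu> \<le> \<nu>'" using not_less \<nu> \<nu>' by simp
  let ?b = "(F ^^ \<nu>) (Suc t)"
  have "?b < n" using F_pow_Suc_less_n t \<nu>(2) by simp
  have "\<not> proj_injective ?b"
  proof
    assume "proj_injective ?b"
    then have "F ((F ^^ \<nu>) t) < F ?b"
      using F_less_F_if_proj_injective[OF simple_collision(1)[OF t \<nu>(1)] \<open>?b < n\<close>] by simp
    then show False using simple_collision(2)[OF t \<nu>(1)] by simp
  qed
  have "(F ^^ (\<nu>' - \<nu>)) ?b = (F ^^ (\<nu>' - \<nu> + \<nu>)) (Suc t)" by (simp add: funpow_add)
  also have "\<nu>' - \<nu> + \<nu> = \<nu>'" using \<open>\<nu> \<le> \<nu>'\<close> by simp
  finally have orbit: "(F ^^ (\<nu>' - \<nu>)) ?b = (F ^^ \<nu>') (Suc t)" .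
  have "(F ^^ \<nu>') (Suc (Suc t)) < n" using F_pow_Suc_less_n t' \<nu>'(2) by simp
  moreover have "(F ^^ \<nu>') (Suc t) < n" using F_pow_Suc_less_n t \<nu>'(2) by simp
  ultimately have "F ((F ^^ \<nu>') (Suc t)) < F ((F ^^ \<nu>') (Suc (Suc t)))"
    using G_pow_F_pow_inj_projective[OF \<open>?b < n\<close> \<open>\<not> proj_injective ?b\<close>, of "\<nu>' - \<nu>"] orbit
      simple_collision(1)[OF t' \<nu>'(1)]
    by (intro F_less_F_if_G_orbit_inj_projective) simp_all
  then show False using simple_collision(2)[OF t' \<nu>'(1)] by simp
qed

lemma res_len_simple_strict_antimono:
  assumes "i \<le> t'" "t' < t" "t + 2 \<le> e"
  shows "res_len t (Suc t) < res_len t' (Suc t')"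
proof -
  have "Suc t' \<le> t" using assms(2) by simp
  then show ?thesis using assms(3)
  proof (induction t rule: dec_induct)
    case base
    then show ?case using res_len_simple_Suc_less[OF assms(1)] by simp
  next
    case (step k)
    have "res_len (Suc k) (Suc (Suc k)) < res_len k (Suc k)"
      using res_len_simple_Suc_less[of k] step.hyps(1) step.prems assms(1) by simp
    also have "\<dots> < res_len t' (Suc t')" using step.IH step.prems by simp
    finally show ?case .
  qed
qed

lemma res_len_socle_even: "even (res_len (e - 1) e)"
proof (rule ccontr)
  assume "odd (res_len (e - 1) e)"
  then obtain s where s: "res_len (e - 1) e = 2 * s + 1" by (blast elim: oddE)
  have "e - 1 < e" using i_less_e by simp
  then have t: "e - 1 < n" "e - 1 < e" "e \<le> F (e - 1)"
    using simple_bounds[of "e - 1"] by simp_all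
  then have "Suc s \<le> q" using res_len_le_d[OF t] s even_d by auto
  moreover have "(F ^^ Suc s) (e - 1) = (F ^^ Suc s) e"
    using res_pts_stall_at_res_len[OF t] s by (simp add: zigzag_even zigzag_odd)
  ultimately show False using F_pow_pred_e_less[of "Suc s"] by simp
qed

lemma charM_I_eq:
  "charM c (i, m) = enat d # map (\<lambda>k. enat (res_len (e - k) (Suc (e - k)))) [2..<m + 1]"
proof -
  let ?z = "\<lambda>k. let p = pd c (e - k, 1) in if odd_e p then p else pd c (i, m)"
  have "[1..<m + 1] = 1 # [2..<m + 1]"
    using upt_conv_Cons[of 1 "m + 1"] two_le_m by (simp only: Suc_1)
  then have "charM c (i, m) = ?z 1 # map ?z [2..<m + 1]"
    unfolding charM_def by (simp only: fst_conv snd_conv list.map(2))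
  moreover have "?z 1 = enat d"
    using pd_simple[of "e - 1"] res_len_socle_even pd_I i_less_e e_le_n
    by (simp add: odd_e_def Let_def)
  moreover have "?z k = enat (res_len (e - k) (Suc (e - k)))" if "k \<in> set [2..<m + 1]" for k
  proof -
    from that have t: "i \<le> e - k" "e - k + 2 \<le> e" by auto
    then obtain \<nu> where \<nu>: "res_len (e - k) (Suc (e - k)) = 2 * \<nu> + 1" by (rule res_len_simple_odd)
    then have "pd c (e - k, 1) = enat (2 * \<nu> + 1)" using pd_simple[of "e - k"] t(2) e_le_n by simp
    then show ?thesis using \<nu> by (simp add: odd_e_def)
  qed
  then have "map ?z [2..<m + 1] = map (\<lambda>k. enat (res_len (e - k) (Suc (e - k)))) [2..<m + 1]"
    by (rule map_cong[OF refl])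
  ultimately show ?thesis by (simp only:)
qed

lemma charM_I:
  "\<exists>cs. charM c (i, m) = enat d # map enat cs \<and> length cs = m - 1 \<and>
        sorted_wrt (<) (cs @ [d]) \<and> (\<forall>x \<in> set cs. odd x)"
proof -
  define cs where "cs = map (\<lambda>k. res_len (e - k) (Suc (e - k))) [2..<m + 1]"
  have "odd x \<and> x < d" if "x \<in> set cs" for x
  proof -
    from that obtain k where k: "k \<in> set [2..<m + 1]" and x: "x = res_len (e - k) (Suc (e - k))"
      by (auto simp: cs_def)
    from k have "i \<le> e - k" "e - k + 2 \<le> e" by auto
    then obtain \<nu> where "res_len (e - k) (Suc (e - k)) = 2 * \<nu> + 1" "\<nu> < q"
      by (rule res_len_simple_odd)
    with x show ?thesis using even_d by auto
  qed
  moreover have "sorted_wrt (<) cs"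
    unfolding cs_def sorted_wrt_map
    by (rule sorted_wrt_mono_rel[OF _ sorted_wrt_upt]) (auto intro: res_len_simple_strict_antimono)
  moreover have "charM c (i, m) = enat d # map enat cs"
    using charM_I_eq by (simp add: cs_def)
  ultimately show ?thesis by (intro exI[of _ cs]) (auto simp: cs_def sorted_wrt_append)
qed

end

theorem proposition8p3:
  fixes c :: "nat list" and d i m :: nat
  assumes "kupisch c" and "concave c" and "even d"
    and "higher_auslander c d"
    and "indec c (i, m)" and "is_inj c (i, m)" and "\<not> is_proj c (i, m)"
    and "2 \<le> m"
  shows "pd c (i, m) = enat d \<and> plus_strictly_increasing c (i, m) \<and>
         (\<exists>cs. charM c (i, m) = enat d # map enat cs \<and> length cs = m - 1 \<and>
               sorted_wrt (<) (cs @ [d]) \<and> (\<forall>x \<in> set cs. odd x))"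
proof -
  interpret injective_nonprojective c d i m
    using assms higher_auslander_domdim_ge higher_auslander_pd_le
    by unfold_locales auto
  show ?thesis
    using pd_I charM_I indec_I \<open>even d\<close> unfolding plus_strictly_increasing_def by blast
qed

end
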